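(* Let $A=\{a_s(n_s)\}_{s=1}^k$ and $B=\{b_t(m_t)\}_{t=1}^l$ be two finite systems of residue classes, where $n_s,m_t$ are positive integers and $a_s,b_t$ are integers with $0\leqslant a_s<n_s$ for $s=1,\ldots,k$ and $0\leqslant b_t<m_t$ for $t=1,\ldots,l$. Let $p$ be a prime with $p>|S(n_1,\ldots,n_k,m_1,\ldots,m_l)|$, and let $\zeta_p$ be a primitive $p$th root of unity. Then $A$ and $B$ are covering equivalent if and only if $$\sum_{s=1}^k\frac{\zeta_p^{a_s}}{1-\zeta_p^{n_s}}=\sum_{t=1}^l\frac{\zeta_p^{b_t}}{1-\zeta_p^{m_t}}.$$
   Context: For a positive integer $n$ and $a\in\{0,\ldots,n-1\}$, $a(n)$ denotes the residue class $\{x\in\mathbb Z: x\equiv a \pmod n\}$. For a finite system $A=\{a_s(n_s)\}_{s=1}^k$ of residue classes (repetitions allowed), its covering function is $w_A:\mathbb Z\to\{0,1,2,\ldots\}$, $w_A(x)=|\{1\leqslant s\leqslant k: x\equiv a_s \pmod{n_s}\}|$ (the covering function of the empty system is the zero function). Two finite systems $A,B$ are covering equivalent if $w_A(x)=w_B(x)$ for all $x\in\mathbb Z$. For positive integers $n_1,\ldots,n_k$, $S(n_1,\ldots,n_k)=\{r/n_s: r=0,\ldots,n_s-1;\ s=1,\ldots,k\}$, a set of rational numbers, and $|S(\cdot)|$ denotes its cardinality. *)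

theory Defs
  imports Complex_Main "HOL-Computational_Algebra.Primes"
begin

text \<open>A finite system of residue classes a_s(n_s) is a list of pairs (a_s, n_s)
  (repetitions allowed).\<close>

type_synonym res_system = "(nat \<times> nat) list"

definition covering_fun :: "res_system \<Rightarrow> int \<Rightarrow> nat" where
  "covering_fun A x = length (filter (\<lambda>(a, n). x mod int n = int a mod int n) A)"

definition covering_equiv :: "res_system \<Rightarrow> res_system \<Rightarrow> bool" where
  "covering_equiv A B \<longleftrightarrow> (\<forall>x::int. covering_fun A x = covering_fun B x)"

definition S_set :: "nat list \<Rightarrow> rat set" where
  "S_set ns = {of_nat r / of_nat n | r n. n \<in> set ns \<and> r < n}"

definition primitive_root_of_unity :: "complex \<Rightarrow> nat \<Rightarrow> bool" where
  "primitive_root_of_unity z p \<longleftrightarrow> z ^ p = 1 \<and> (\<forall>k. 0 < k \<and> k < p \<longrightarrow> z ^ k \<noteq> 1)"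

end

theory Submission
  imports Defs "HOL-Computational_Algebra.Polynomial_Factorial" "HOL-Computational_Algebra.Field_as_Ring"
begin

text \<open>
  Let N be the product of the moduli. The covering function w_A is N-periodic and
  sum_(x<N) w_A(x) z^x = (1 - z^N) F_A(z) with F_A(z) = sum_s z^(a_s) / (1 - z^(n_s)), so A and B are
  covering equivalent iff F_A and F_B agree off the N-th roots of unity. Since p does not divide N,
  F_A(zeta) = F_B(zeta) says that an integer polynomial vanishes at zeta, and the irreducibility of
  1 + X + ... + X^(p-1) over the rationals (Eisenstein and Gauss) transfers this to every zeta^u with
  0 < u < p. Multiplying F_A - F_B by the product of the z - w, w in the set W of n-th roots of unity
  for all moduli n, gives a polynomial of degree below |W|. As r/n |-> exp(2 pi i r/n) maps S onto W,
  |W| <= |S| < p, so the p - 1 zeros zeta^u force this polynomial, and with it F_A - F_B, to vanish.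
\<close>

section \<open>Irreducibility of 1 + X + ... + X^(p-1) over the rationals\<close>

lemma map_poly_of_rat_add:
  "map_poly (of_rat :: rat \<Rightarrow> 'a::field_char_0) (f + g) = map_poly of_rat f + map_poly of_rat g"
  by (rule poly_eqI) (simp add: coeff_map_poly of_rat_add)

lemma map_poly_of_rat_mult:
  "map_poly (of_rat :: rat \<Rightarrow> 'a::field_char_0) (f * g) = map_poly of_rat f * map_poly of_rat g"
  by (rule poly_eqI) (simp add: coeff_map_poly coeff_mult of_rat_sum of_rat_mult)

lemma irreducible_dvd_of_common_root:
  fixes q g :: "rat poly" and x :: "'a::field_char_0"
  assumes "irreducible q"
    and "poly (map_poly of_rat q) x = 0" and "poly (map_poly of_rat g) x = 0"
  shows "q dvd g"
proof (rule ccontr)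
  assume "\<not> q dvd g"
  with assms(1) have "coprime q g"
    by (intro prime_elem_imp_coprime irreducible_imp_prime_elem)
  then obtain s t where "s * q + t * g = 1"
    using bezout_coefficients_fst_snd[of q g] by (metis coprime_imp_gcd_eq_1)
  then have "map_poly of_rat s * map_poly of_rat q + map_poly of_rat t * map_poly of_rat g
      = (1 :: 'a poly)"
    by (metis map_poly_of_rat_add map_poly_of_rat_mult map_poly_1' of_rat_1)
  then have "poly (map_poly of_rat s * map_poly of_rat q + map_poly of_rat t * map_poly of_rat g) x
      = (1 :: 'a)"
    by simp
  with assms(2,3) show False
    by simp
qed

definition geometric_poly :: "nat \<Rightarrow> 'a::comm_ring_1 poly" where
  "geometric_poly n = (\<Sum>k<n. [:0, 1:] ^ k)"

lemma coeff_geometric_poly: "coeff (geometric_poly n) k = (if k < n then 1 else 0)"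
  by (simp add: geometric_poly_def coeff_sum monom_altdef[of 1, simplified, symmetric] coeff_monom)

lemma map_poly_geometric_poly:
  assumes "f 0 = 0" "f 1 = 1"
  shows "map_poly f (geometric_poly n) = geometric_poly n"
  by (rule poly_eqI) (simp add: coeff_map_poly coeff_geometric_poly assms)

lemma poly_geometric_poly_root_of_unity:
  fixes x :: "'a::field"
  assumes "x ^ n = 1" "x \<noteq> 1"
  shows "poly (geometric_poly n) x = 0"
  using assms by (simp add: geometric_poly_def poly_sum sum_gp_strict)

lemma pcompose_x_power: "pcompose ([:0, 1:] ^ k) q = (q :: 'a::comm_ring_1 poly) ^ k"
  by (induction k) (simp_all add: pcompose_pCons pcompose_1)

lemma coeff_pcompose_geometric_poly:
  "coeff (pcompose (geometric_poly n) [:1, 1:]) k = (of_nat (n choose Suc k) :: 'a::comm_ring_1)"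
proof -
  have "[:0, 1:] * pcompose (geometric_poly n) [:1, 1:] = [:1, 1:] ^ n - (1 :: 'a poly)"
    using power_diff_1_eq[of "[:1, 1:] :: 'a poly" n]
    by (simp add: geometric_poly_def pcompose_sum pcompose_x_power one_pCons)
  then have "pCons 0 (pcompose (geometric_poly n) [:1, 1:]) = [:1, 1:] ^ n - (1 :: 'a poly)"
    by simp
  then have "coeff (pcompose (geometric_poly n) [:1, 1:]) k = coeff ([:1, 1:] ^ n - 1 :: 'a poly) (Suc k)"
    by (metis coeff_pCons_Suc)
  also have "\<dots> = coeff ([:1, 1:] ^ n :: 'a poly) (Suc k)"
    by (simp add: one_pCons)
  also have "\<dots> = of_nat (n choose Suc k)"
    by (cases "Suc k \<le> n") (simp_all add: coeff_linear_poly_power coeff_eq_0 degree_linear_power binomial_eq_0)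
  finally show ?thesis .
qed

lemma eisenstein_criterion:
  fixes f g h :: "'a::idom poly" and q :: 'a
  assumes q: "prime_elem q" and "f = g * h"
    and low: "\<And>k. k < degree f \<Longrightarrow> q dvd coeff f k"
    and lead: "\<not> q dvd lead_coeff f" and const: "\<not> q\<^sup>2 dvd coeff f 0"
  shows "degree g = 0 \<or> degree h = 0"
proof -
  have degree_0: "degree h = 0"
    if fgh: "f = g * h" and h0: "\<not> q dvd coeff h 0" for g h
  proof (rule ccontr)
    assume "degree h \<noteq> 0"
    from fgh lead have "g \<noteq> 0" "h \<noteq> 0"
      by auto
    from fgh lead q have "\<not> q dvd lead_coeff g"
      by (simp add: lead_coeff_mult prime_elem_dvd_mult_iff)
    define k where "k = (LEAST k. \<not> q dvd coeff g k)"
    have k: "\<not> q dvd coeff g k" "k \<le> degree g"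
      using \<open>\<not> q dvd lead_coeff g\<close> unfolding k_def by (fact LeastI, fact Least_le)
    have below: "q dvd coeff g i" if "i < k" for i
      using that unfolding k_def by (rule not_less_Least[THEN not_not[THEN iffD1]])
    have "k < degree f"
      using k(2) \<open>degree h \<noteq> 0\<close> \<open>g \<noteq> 0\<close> \<open>h \<noteq> 0\<close> by (simp add: fgh degree_mult_eq)
    then have "q dvd coeff f k"
      by (rule low)
    moreover have "coeff f k = (\<Sum>i<k. coeff g i * coeff h (k - i)) + coeff g k * coeff h 0"
      by (simp add: fgh coeff_mult flip: lessThan_Suc_atMost)
    moreover have "q dvd (\<Sum>i<k. coeff g i * coeff h (k - i))"
      by (rule dvd_sum) (simp add: below)
    ultimately have "q dvd coeff g k * coeff h 0"
      by (metis dvd_add_right_iff)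
    with q k(1) h0 show False
      by (simp add: prime_elem_dvd_mult_iff)
  qed
  have "\<not> (q dvd coeff g 0 \<and> q dvd coeff h 0)"
    using const \<open>f = g * h\<close> by (auto simp: coeff_mult_0 power2_eq_square mult_dvd_mono)
  then show ?thesis
    using degree_0[of g h] degree_0[of h g] \<open>f = g * h\<close> by (auto simp: mult.commute)
qed

lemma geometric_poly_int_factor_degree_0:
  fixes g h :: "int poly"
  assumes "prime p" and "geometric_poly p = g * h"
  shows "degree g = 0 \<or> degree h = 0"
proof -
  have "2 \<le> p"
    using \<open>prime p\<close> by (rule prime_ge_2_nat)
  define shift where "shift f = pcompose f [:1, 1:]" for f :: "int poly"
  have coeff_shift: "coeff (shift (geometric_poly p)) k = int (p choose Suc k)" for k
    by (simp add: shift_def coeff_pcompose_geometric_poly)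
  have degree_shift: "degree (shift (geometric_poly p)) = p - 1"
    using \<open>2 \<le> p\<close> by (intro antisym degree_le le_degree) (auto simp: coeff_shift binomial_eq_0)
  have "degree (shift g) = 0 \<or> degree (shift h) = 0"
  proof (rule eisenstein_criterion[of "int p"])
    show "prime_elem (int p)"
      using \<open>prime p\<close> by simp
    show "shift (geometric_poly p) = shift g * shift h"
      by (simp add: shift_def assms(2) pcompose_mult)
    show "int p dvd coeff (shift (geometric_poly p)) k" if "k < degree (shift (geometric_poly p))" for k
      using that \<open>prime p\<close> by (simp add: coeff_shift degree_shift dvd_choose_prime)
    show "\<not> int p dvd lead_coeff (shift (geometric_poly p))"
      using \<open>2 \<le> p\<close> by (simp add: coeff_shift degree_shift)
    show "\<not> (int p)\<^sup>2 dvd coeff (shift (geometric_poly p)) 0"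
      using \<open>2 \<le> p\<close> by (simp add: coeff_shift power2_eq_square)
  qed
  then show ?thesis
    by (simp add: shift_def degree_pcompose)
qed

lemma map_poly_of_int_mult:
  "map_poly (of_int :: int \<Rightarrow> 'a::comm_ring_1) (f * g) = map_poly of_int f * map_poly of_int g"
  by (rule poly_eqI) (simp add: coeff_map_poly coeff_mult)

lemma rat_poly_clear_denominators:
  fixes f :: "rat poly"
  obtains c :: int and g :: "int poly" where "0 < c" "map_poly of_int g = smult (of_int c) f"
proof (induction f arbitrary: thesis rule: pCons_induct)
  case 0
  show ?case
    by (rule 0[of 1 0]) simp_all
next
  case (pCons a f)
  obtain c g where "0 < c" and g: "map_poly of_int g = smult (of_int c) f"
    using pCons.IH by blast
  obtain n d where "quotient_of a = (n, d)"
    by fastforce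
  then have "0 < d" and a: "a = of_int n / of_int d"
    by (simp_all add: quotient_of_denom_pos quotient_of_div)
  have "map_poly of_int (pCons (n * c) (smult d g)) = smult (of_int (c * d)) (pCons a f)"
    using \<open>0 < d\<close> by (simp add: map_poly_pCons map_poly_smult g a mult.commute)
  with \<open>0 < c\<close> \<open>0 < d\<close> show ?case
    by (intro pCons.prems[of "c * d"]) simp_all
qed

lemma rat_factor_degree_0_if_int_factor_degree_0:
  fixes f :: "int poly" and g h :: "rat poly"
  assumes "content f = 1"
    and int_factor: "\<And>g' h'. f = g' * h' \<Longrightarrow> degree g' = 0 \<or> degree h' = 0"
    and "map_poly of_int f = g * h"
  shows "degree g = 0 \<or> degree h = 0"
proof -
  obtain c g' where "0 < c" and g': "map_poly of_int g' = smult (of_int c) g"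
    by (rule rat_poly_clear_denominators)
  obtain d h' where "0 < d" and h': "map_poly of_int h' = smult (of_int d) h"
    by (rule rat_poly_clear_denominators)
  have "map_poly of_int (g' * h') = (map_poly of_int (smult (c * d) f) :: rat poly)"
    by (simp add: map_poly_of_int_mult map_poly_smult g' h' assms(3) mult_ac)
  then have "g' * h' = smult (c * d) f"
    by (simp add: poly_eq_iff coeff_map_poly flip: of_int_mult)
  then have "primitive_part g' * primitive_part h' = primitive_part (smult (c * d) f)"
    by (metis primitive_part_mult)
  also have "\<dots> = f"
    using \<open>0 < c\<close> \<open>0 < d\<close> \<open>content f = 1\<close>
    by (simp add: primitive_part_smult primitive_part_prim)
  finally have "primitive_part g' * primitive_part h' = f" .
  then have "degree g' = 0 \<or> degree h' = 0"
    using int_factor by fastforce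
  moreover have "degree g' = degree g" "degree h' = degree h"
    using arg_cong[OF g', of degree] arg_cong[OF h', of degree] \<open>0 < c\<close> \<open>0 < d\<close>
    by (simp_all add: degree_map_poly)
  ultimately show ?thesis
    by simp
qed

lemma irreducible_geometric_poly_rat:
  assumes "prime p"
  shows "irreducible (geometric_poly p :: rat poly)"
proof (rule irreducibleI)
  have "2 \<le> p"
    using \<open>prime p\<close> by (rule prime_ge_2_nat)
  then have "coeff (geometric_poly p :: rat poly) 1 \<noteq> 0"
    by (simp add: coeff_geometric_poly)
  then show "geometric_poly p \<noteq> (0 :: rat poly)" and "\<not> is_unit (geometric_poly p :: rat poly)"
    by (auto simp: is_unit_poly_iff)
  show "is_unit g \<or> is_unit h" if "geometric_poly p = g * h" for g h :: "rat poly"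
  proof -
    have "coeff (geometric_poly p :: int poly) 0 = 1"
      using \<open>2 \<le> p\<close> by (simp add: coeff_geometric_poly)
    then have content: "content (geometric_poly p :: int poly) = 1"
      by (metis content_dvd_coeff normalize_content is_unit_normalize)
    have image: "map_poly of_int (geometric_poly p :: int poly) = g * h"
      by (simp add: map_poly_geometric_poly that)
    have "degree g = 0 \<or> degree h = 0"
      using content geometric_poly_int_factor_degree_0[OF \<open>prime p\<close>] image
      by (rule rat_factor_degree_0_if_int_factor_degree_0)
    moreover have "g \<noteq> 0" "h \<noteq> 0"
      using that \<open>geometric_poly p \<noteq> 0\<close> by auto
    ultimately show ?thesis
      by (auto simp: is_unit_iff_degree)
  qed
qed

section \<open>Powers of a primitive root of unity\<close>

lemma primitive_root_of_unity_power_eq_1_iff: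
  assumes "primitive_root_of_unity \<zeta> p" and "0 < p"
  shows "\<zeta> ^ u = 1 \<longleftrightarrow> p dvd u"
proof -
  have "\<zeta> ^ p = 1" and prim: "\<And>k. 0 < k \<Longrightarrow> k < p \<Longrightarrow> \<zeta> ^ k \<noteq> 1"
    using assms(1) by (auto simp: primitive_root_of_unity_def)
  have "\<zeta> ^ u = (\<zeta> ^ p) ^ (u div p) * \<zeta> ^ (u mod p)"
    by (simp flip: power_mult power_add)
  then have "\<zeta> ^ u = \<zeta> ^ (u mod p)"
    using \<open>\<zeta> ^ p = 1\<close> by simp
  moreover have "\<zeta> ^ (u mod p) \<noteq> 1" if "\<not> p dvd u"
    using that \<open>0 < p\<close> by (intro prim) (simp_all add: mod_greater_zero_iff_not_dvd)
  ultimately show ?thesis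
    by (auto elim: dvdE simp: power_mult)
qed

lemma inj_on_primitive_root_power:
  assumes "primitive_root_of_unity \<zeta> p" and "0 < p"
  shows "inj_on (\<lambda>u. \<zeta> ^ u) {..<p}"
proof -
  have "\<zeta> \<noteq> 0"
    using assms by (auto simp: primitive_root_of_unity_def power_0_left)
  have "\<zeta> ^ i \<noteq> \<zeta> ^ j" if "i < j" "j < p" for i j
  proof
    assume "\<zeta> ^ i = \<zeta> ^ j"
    then have "\<zeta> ^ (j - i) = 1"
      using \<open>\<zeta> \<noteq> 0\<close> \<open>i < j\<close> by (simp add: power_diff)
    with \<open>i < j\<close> \<open>j < p\<close> show False
      using primitive_root_of_unity_power_eq_1_iff[OF assms] by (auto dest: dvd_imp_le)
  qed
  then show ?thesis
    by (metis inj_onI lessThan_iff linorder_neqE_nat)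
qed

lemma card_primitive_root_powers:
  assumes "primitive_root_of_unity \<zeta> p" and "0 < p"
  shows "card ((\<lambda>u. \<zeta> ^ u) ` {1..<p}) = p - 1"
proof -
  have "inj_on (\<lambda>u. \<zeta> ^ u) {1..<p}"
    by (rule inj_on_subset[OF inj_on_primitive_root_power[OF assms]]) auto
  then show ?thesis
    by (simp add: card_image)
qed

lemma primitive_root_power_power_ne_1:
  assumes "primitive_root_of_unity \<zeta> p" and "prime p"
    and "0 < u" "u < p" and "0 < n" "n < p"
  shows "(\<zeta> ^ u) ^ n \<noteq> 1"
proof -
  have "\<not> p dvd u" and "\<not> p dvd n"
    using assms(3-6) by (auto dest: dvd_imp_le)
  then have "\<not> p dvd u * n"
    using \<open>prime p\<close> by (simp add: prime_dvd_mult_iff)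
  then show ?thesis
    using primitive_root_of_unity_power_eq_1_iff[OF assms(1) prime_gt_0_nat[OF \<open>prime p\<close>]]
    by (simp flip: power_mult)
qed

lemma poly_of_rat_primitive_root_power:
  fixes g :: "rat poly"
  assumes "prime p" and "primitive_root_of_unity \<zeta> p"
    and "poly (map_poly of_rat g) \<zeta> = 0" and "\<not> p dvd u"
  shows "poly (map_poly of_rat g) (\<zeta> ^ u) = 0"
proof -
  have "0 < p"
    using \<open>prime p\<close> by (rule prime_gt_0_nat)
  have root: "poly (map_poly of_rat (geometric_poly p)) (\<zeta> ^ k) = 0" if "\<not> p dvd k" for k
  proof -
    have "(\<zeta> ^ k) ^ p = 1"
      using primitive_root_of_unity_power_eq_1_iff[OF assms(2) \<open>0 < p\<close>, of "k * p"]
      by (simp add: power_mult)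
    moreover have "\<zeta> ^ k \<noteq> 1"
      using primitive_root_of_unity_power_eq_1_iff[OF assms(2) \<open>0 < p\<close>] that by simp
    ultimately show ?thesis
      by (simp add: map_poly_geometric_poly poly_geometric_poly_root_of_unity)
  qed
  have "geometric_poly p dvd g"
    using irreducible_geometric_poly_rat[OF \<open>prime p\<close>] root[of 1] assms(3) \<open>prime p\<close>
    by (intro irreducible_dvd_of_common_root[of _ \<zeta>]) (auto simp: prime_nat_iff)
  then obtain r where "g = geometric_poly p * r" ..
  with root[OF \<open>\<not> p dvd u\<close>] show ?thesis
    by (simp add: map_poly_of_rat_mult)
qed

section \<open>Generating functions of systems of residue classes\<close>

definition covering_gen_fun :: "res_system \<Rightarrow> 'a::field \<Rightarrow> 'a" where
  "covering_gen_fun A z = (\<Sum>(a, n) \<leftarrow> A. z ^ a / (1 - z ^ n))"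

lemma covering_fun_Cons:
  "covering_fun ((a, n) # A) x = (if x mod int n = int a mod int n then 1 else 0) + covering_fun A x"
  by (simp add: covering_fun_def)

lemma covering_fun_mod:
  assumes "\<forall>(a, n) \<in> set A. n dvd N"
  shows "covering_fun A (x mod int N) = covering_fun A x"
  unfolding covering_fun_def
proof (intro arg_cong[where f = length] filter_cong refl)
  fix h assume "h \<in> set A"
  with assms obtain a n where "h = (a, n)" "n dvd N"
    by fastforce
  then show "(case h of (a, n) \<Rightarrow> x mod int N mod int n = int a mod int n)
      \<longleftrightarrow> (case h of (a, n) \<Rightarrow> x mod int n = int a mod int n)"
    by (simp add: mod_mod_cancel)
qed

lemma sum_residue_class_power:
  fixes z :: "'a::field"
  assumes "a < n" and "n dvd N" and "z ^ n \<noteq> 1"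
  shows "(\<Sum>x<N. if x mod n = a then z ^ x else 0) = (1 - z ^ N) * (z ^ a / (1 - z ^ n))"
proof -
  obtain K where N: "N = n * K"
    using \<open>n dvd N\<close> ..
  have "{x \<in> {..<N}. x mod n = a} = (\<lambda>q. a + n * q) ` {..<K}"
  proof (intro equalityI subsetI)
    fix x assume "x \<in> {x \<in> {..<N}. x mod n = a}"
    then have "x = a + n * (x div n)" and "x div n < K"
      by (auto simp: N less_mult_imp_div_less mult.commute)
    then show "x \<in> (\<lambda>q. a + n * q) ` {..<K}"
      by blast
  next
    fix x assume "x \<in> (\<lambda>q. a + n * q) ` {..<K}"
    then obtain q where "q < K" "x = a + n * q"
      by blast
    moreover have "a + n * q < n * Suc q"
      using \<open>a < n\<close> by simp
    moreover have "n * Suc q \<le> n * K"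
      using \<open>q < K\<close> by (intro mult_le_mono2) simp
    ultimately show "x \<in> {x \<in> {..<N}. x mod n = a}"
      using \<open>a < n\<close> by (simp add: N)
  qed
  moreover have "inj_on (\<lambda>q. a + n * q) {..<K}"
    using \<open>a < n\<close> by (auto simp: inj_on_def)
  ultimately have "(\<Sum>x<N. if x mod n = a then z ^ x else 0) = (\<Sum>q<K. z ^ (a + n * q))"
    by (simp add: sum.inter_filter[symmetric] sum.reindex)
  also have "\<dots> = z ^ a * (\<Sum>q<K. (z ^ n) ^ q)"
    by (simp add: power_add power_mult sum_distrib_left)
  also have "\<dots> = (1 - z ^ N) * (z ^ a / (1 - z ^ n))"
    using \<open>z ^ n \<noteq> 1\<close> by (simp add: sum_gp_strict N power_mult)
  finally show ?thesis .
qed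

lemma sum_covering_fun_power:
  fixes z :: "'a::field"
  assumes "\<forall>(a, n) \<in> set A. a < n \<and> n dvd N \<and> z ^ n \<noteq> 1"
  shows "(\<Sum>x<N. of_nat (covering_fun A (int x)) * z ^ x) = (1 - z ^ N) * covering_gen_fun A z"
  using assms
proof (induction A)
  case Nil
  then show ?case
    by (simp add: covering_fun_def covering_gen_fun_def)
next
  case (Cons h A)
  obtain a n where h: "h = (a, n)"
    by fastforce
  with Cons.prems have "a < n" "n dvd N" "z ^ n \<noteq> 1"
    by auto
  have "int x mod int n = int a mod int n \<longleftrightarrow> x mod n = a" for x
    using \<open>a < n\<close> by (metis mod_less of_nat_eq_iff zmod_int)
  then have "of_nat (covering_fun (h # A) (int x)) * z ^ x
      = (if x mod n = a then z ^ x else 0) + of_nat (covering_fun A (int x)) * z ^ x" for x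
    by (simp add: h covering_fun_Cons distrib_right)
  then have "(\<Sum>x<N. of_nat (covering_fun (h # A) (int x)) * z ^ x)
      = (\<Sum>x<N. if x mod n = a then z ^ x else 0) + (\<Sum>x<N. of_nat (covering_fun A (int x)) * z ^ x)"
    by (simp add: sum.distrib)
  also have "\<dots> = (1 - z ^ N) * covering_gen_fun (h # A) z"
    using Cons sum_residue_class_power[OF \<open>a < n\<close> \<open>n dvd N\<close> \<open>z ^ n \<noteq> 1\<close>]
    by (simp add: h covering_gen_fun_def distrib_left)
  finally show ?case .
qed

definition covering_diff_poly :: "res_system \<Rightarrow> res_system \<Rightarrow> nat \<Rightarrow> 'a::comm_ring_1 poly" where
  "covering_diff_poly A B N =
     (\<Sum>x<N. monom (of_int (int (covering_fun A (int x)) - int (covering_fun B (int x)))) x)"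

lemma coeff_covering_diff_poly:
  "coeff (covering_diff_poly A B N) x =
     (if x < N then of_int (int (covering_fun A (int x)) - int (covering_fun B (int x))) else 0)"
  by (simp add: covering_diff_poly_def coeff_sum coeff_monom)

lemma map_poly_of_rat_covering_diff_poly:
  "map_poly (of_rat :: rat \<Rightarrow> 'a::field_char_0) (covering_diff_poly A B N) = covering_diff_poly A B N"
  by (rule poly_eqI) (simp add: coeff_map_poly coeff_covering_diff_poly of_rat_diff)

lemma poly_covering_diff_poly:
  fixes z :: "'a::field"
  assumes "\<forall>(a, n) \<in> set A \<union> set B. a < n \<and> n dvd N" and "z ^ N \<noteq> 1"
  shows "poly (covering_diff_poly A B N) z = (1 - z ^ N) * (covering_gen_fun A z - covering_gen_fun B z)"
proof -
  have "z ^ n \<noteq> 1" if "n dvd N" for n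
    using that \<open>z ^ N \<noteq> 1\<close> by (auto elim: dvdE simp: power_mult)
  with assms(1) have "\<forall>(a, n) \<in> set A. a < n \<and> n dvd N \<and> z ^ n \<noteq> 1"
    and "\<forall>(a, n) \<in> set B. a < n \<and> n dvd N \<and> z ^ n \<noteq> 1"
    by auto
  then have "(\<Sum>x<N. of_nat (covering_fun A (int x)) * z ^ x) = (1 - z ^ N) * covering_gen_fun A z"
    and "(\<Sum>x<N. of_nat (covering_fun B (int x)) * z ^ x) = (1 - z ^ N) * covering_gen_fun B z"
    by (simp_all add: sum_covering_fun_power)
  moreover have "poly (covering_diff_poly A B N) z =
      (\<Sum>x<N. of_nat (covering_fun A (int x)) * z ^ x) - (\<Sum>x<N. of_nat (covering_fun B (int x)) * z ^ x)"
    by (simp add: covering_diff_poly_def poly_sum poly_monom sum_subtractf left_diff_distrib)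
  ultimately show ?thesis
    by (simp add: right_diff_distrib)
qed

lemma covering_equiv_iff_gen_fun_eq:
  assumes "\<forall>(a, n) \<in> set A \<union> set B. a < n \<and> n dvd N" and "0 < N"
  shows "covering_equiv A B \<longleftrightarrow>
    (\<forall>z::'a::field_char_0. z ^ N \<noteq> 1 \<longrightarrow> covering_gen_fun A z = covering_gen_fun B z)"
proof
  assume "covering_equiv A B"
  then have "covering_diff_poly A B N = (0 :: 'a poly)"
    by (simp add: covering_diff_poly_def covering_equiv_def)
  then show "\<forall>z::'a. z ^ N \<noteq> 1 \<longrightarrow> covering_gen_fun A z = covering_gen_fun B z"
    using poly_covering_diff_poly[OF assms(1)] by fastforce
next
  assume eq: "\<forall>z::'a. z ^ N \<noteq> 1 \<longrightarrow> covering_gen_fun A z = covering_gen_fun B z"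
  have "covering_diff_poly A B N = (0 :: 'a poly)"
  proof (rule ccontr)
    assume "covering_diff_poly A B N \<noteq> (0 :: 'a poly)"
    then have "finite {z::'a. poly (covering_diff_poly A B N) z = 0}"
      by (rule poly_roots_finite)
    moreover have "finite {z::'a. z ^ N = 1}"
      using poly_roots_finite[of "monom 1 N - 1 :: 'a poly"] \<open>0 < N\<close>
      by (simp add: poly_monom monom_eq_1_iff)
    moreover have "poly (covering_diff_poly A B N) z = 0" if "z ^ N \<noteq> 1" for z :: 'a
      using eq poly_covering_diff_poly[OF assms(1) that] that by simp
    then have "UNIV = {z::'a. poly (covering_diff_poly A B N) z = 0} \<union> {z. z ^ N = 1}"
      by auto
    ultimately show False
      by (metis finite_Un infinite_UNIV_char_0)
  qed
  then have coeff_0: "coeff (covering_diff_poly A B N :: 'a poly) y = 0" for y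
    by simp
  have "covering_fun A (int y) = covering_fun B (int y)" if "y < N" for y
    using coeff_0[of y] that by (simp add: coeff_covering_diff_poly)
  have "\<forall>(a, n) \<in> set A. n dvd N" and "\<forall>(a, n) \<in> set B. n dvd N"
    using assms(1) by auto
  then have "covering_fun A x = covering_fun B x" for x
    using \<open>0 < N\<close> covering_fun_mod[of A N x] covering_fun_mod[of B N x]
      \<open>\<And>y. y < N \<Longrightarrow> covering_fun A (int y) = covering_fun B (int y)\<close>[of "nat (x mod int N)"]
    by (simp add: nat_less_iff)
  then show "covering_equiv A B"
    by (simp add: covering_equiv_def)
qed

lemma covering_gen_fun_eq_primitive_root_power:
  fixes \<zeta> :: complex
  assumes "\<forall>(a, n) \<in> set A \<union> set B. a < n \<and> n dvd N"
    and "prime p" and "\<not> p dvd N" and "primitive_root_of_unity \<zeta> p" and "\<not> p dvd u"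
    and "covering_gen_fun A \<zeta> = covering_gen_fun B \<zeta>"
  shows "covering_gen_fun A (\<zeta> ^ u) = covering_gen_fun B (\<zeta> ^ u)"
proof -
  have "\<zeta> ^ k \<noteq> 1" if "\<not> p dvd k" for k
    using primitive_root_of_unity_power_eq_1_iff[OF assms(4) prime_gt_0_nat[OF \<open>prime p\<close>]] that
    by simp
  then have "\<zeta> ^ N \<noteq> 1" and "(\<zeta> ^ u) ^ N \<noteq> 1"
    using assms(2,3,5) by (simp_all add: prime_dvd_mult_iff flip: power_mult)
  have "poly (map_poly of_rat (covering_diff_poly A B N)) \<zeta> = 0"
    using poly_covering_diff_poly[OF assms(1) \<open>\<zeta> ^ N \<noteq> 1\<close>] assms(6)
    by (simp add: map_poly_of_rat_covering_diff_poly)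
  then have "poly (map_poly of_rat (covering_diff_poly A B N)) (\<zeta> ^ u) = 0"
    by (rule poly_of_rat_primitive_root_power[OF assms(2,4) _ assms(5)])
  then show ?thesis
    using poly_covering_diff_poly[OF assms(1) \<open>(\<zeta> ^ u) ^ N \<noteq> 1\<close>] \<open>(\<zeta> ^ u) ^ N \<noteq> 1\<close>
    by (simp add: map_poly_of_rat_covering_diff_poly)
qed

section \<open>Clearing the denominators of the generating function\<close>

lemma prod_diff_roots_unity:
  fixes z :: complex
  assumes "0 < n"
  shows "(\<Prod>w \<in> {w. w ^ n = 1}. z - w) = z ^ n - 1"
proof -
  let ?R = "{w::complex. w ^ n = 1}"
  have "finite ?R" and "card ?R = n"
    using assms by (simp_all add: finite_roots_unity card_roots_unity_eq)
  have "(\<Prod>w\<in>?R. [:- w, 1:]) = monom 1 n - 1"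
  proof (rule poly_eqI_degree_lead_coeff[where n = n and A = ?R])
    have "degree (\<Prod>w\<in>?R. [:- w, 1:]) = n"
      using \<open>finite ?R\<close> \<open>card ?R = n\<close> by (simp add: degree_prod_eq_sum_degree)
    then show "coeff (\<Prod>w\<in>?R. [:- w, 1:]) n = coeff (monom 1 n - 1) n"
      and "degree (\<Prod>w\<in>?R. [:- w, 1:]) \<le> n"
      using assms lead_coeff_prod[of "\<lambda>w. [:- w, 1:]" ?R] by simp_all
    show "degree (monom 1 n - 1 :: complex poly) \<le> n"
      by (intro degree_diff_le) (simp_all add: degree_monom_eq)
    show "poly (\<Prod>w\<in>?R. [:- w, 1:]) z = poly (monom 1 n - 1) z" if "z \<in> ?R" for z
      using that \<open>finite ?R\<close> by (simp add: poly_prod poly_monom prod_zero_iff)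
  qed (simp add: \<open>card ?R = n\<close>)
  then have "poly (\<Prod>w\<in>?R. [:- w, 1:]) z = poly (monom 1 n - 1) z"
    by simp
  then show ?thesis
    by (simp add: poly_prod poly_monom)
qed

definition cleared_gen_fun_poly :: "complex set \<Rightarrow> res_system \<Rightarrow> complex poly" where
  "cleared_gen_fun_poly W A = (\<Sum>(a, n) \<leftarrow> A. - (monom 1 a * (\<Prod>w \<in> W - {w. w ^ n = 1}. [:- w, 1:])))"

lemma poly_cleared_gen_fun_poly:
  assumes "finite W" and "\<forall>(a, n) \<in> set A. a < n \<and> {w. w ^ n = 1} \<subseteq> W" and "z \<notin> W"
  shows "poly (cleared_gen_fun_poly W A) z = (\<Prod>w\<in>W. z - w) * covering_gen_fun A z"
  using assms(2)
proof (induction A)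
  case Nil
  then show ?case
    by (simp add: cleared_gen_fun_poly_def covering_gen_fun_def)
next
  case (Cons h A)
  obtain a n where h: "h = (a, n)"
    by fastforce
  with Cons.prems have "0 < n" and sub: "{w. w ^ n = 1} \<subseteq> W"
    by auto
  with \<open>z \<notin> W\<close> have "1 - z ^ n \<noteq> 0"
    by auto
  have split: "(\<Prod>w\<in>W. z - w) = (z ^ n - 1) * (\<Prod>w\<in>W - {w. w ^ n = 1}. z - w)"
    using prod.subset_diff[OF sub \<open>finite W\<close>, of "\<lambda>w. z - w"] prod_diff_roots_unity[OF \<open>0 < n\<close>, of z]
    by (simp add: mult.commute)
  have neg: "(z ^ n - 1) * (z ^ a / (1 - z ^ n)) = - (z ^ a)"
    using \<open>1 - z ^ n \<noteq> 0\<close> by (simp add: field_simps)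
  have "poly (- (monom 1 a * (\<Prod>w \<in> W - {w. w ^ n = 1}. [:- w, 1:]))) z
      = - (z ^ a) * (\<Prod>w\<in>W - {w. w ^ n = 1}. z - w)"
    by (simp add: poly_monom poly_prod)
  also have "\<dots> = (\<Prod>w\<in>W. z - w) * (z ^ a / (1 - z ^ n))"
    by (simp only: split neg[symmetric] ac_simps)
  finally have "poly (- (monom 1 a * (\<Prod>w \<in> W - {w. w ^ n = 1}. [:- w, 1:]))) z
      = (\<Prod>w\<in>W. z - w) * (z ^ a / (1 - z ^ n))" .
  with Cons show ?case
    by (simp add: h cleared_gen_fun_poly_def covering_gen_fun_def distrib_left)
qed

lemma degree_cleared_gen_fun_poly:
  assumes "finite W" and "\<forall>(a, n) \<in> set A. a < n \<and> {w. w ^ n = 1} \<subseteq> W"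
  shows "degree (cleared_gen_fun_poly W A) \<le> card W - 1"
  using assms(2)
proof (induction A)
  case Nil
  then show ?case
    by (simp add: cleared_gen_fun_poly_def)
next
  case (Cons h A)
  obtain a n where h: "h = (a, n)"
    by fastforce
  define t where "t = monom 1 a * (\<Prod>w \<in> W - {w. w ^ n = 1}. [:- w, 1:])"
  from h Cons.prems have "a < n" and sub: "{w. w ^ n = 1} \<subseteq> W"
    by auto
  then have "card (W - {w. w ^ n = 1}) = card W - n" and "n \<le> card W"
    using \<open>finite W\<close> card_mono[OF \<open>finite W\<close> sub]
    by (simp_all add: card_Diff_subset finite_roots_unity card_roots_unity_eq)
  moreover have "degree t \<le> a + card (W - {w. w ^ n = 1})"
    using \<open>finite W\<close> unfolding t_def
    by (intro order.trans[OF degree_mult_le]) (simp add: degree_monom_eq degree_prod_eq_sum_degree)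
  ultimately have "degree t \<le> card W - 1"
    using \<open>a < n\<close> by simp
  moreover have "cleared_gen_fun_poly W (h # A) = cleared_gen_fun_poly W A - t"
    by (simp add: h t_def cleared_gen_fun_poly_def)
  ultimately show ?case
    using Cons by (simp add: degree_diff_le)
qed

lemma covering_gen_fun_eq_if_eq_on_large_set:
  fixes W Z :: "complex set"
  assumes "finite W" and classes: "\<forall>(a, n) \<in> set A \<union> set B. a < n \<and> {w. w ^ n = 1} \<subseteq> W"
    and "finite Z" and "Z \<noteq> {}" and "Z \<inter> W = {}" and "card W \<le> card Z"
    and eq: "\<forall>z\<in>Z. covering_gen_fun A z = covering_gen_fun B z" and "z \<notin> W"
  shows "covering_gen_fun A z = covering_gen_fun B z"
proof -
  define P where "P = cleared_gen_fun_poly W A - cleared_gen_fun_poly W B"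
  have poly_P: "poly P x = (\<Prod>w\<in>W. x - w) * (covering_gen_fun A x - covering_gen_fun B x)"
    if "x \<notin> W" for x
    using classes that by (simp add: P_def poly_cleared_gen_fun_poly[OF \<open>finite W\<close>] right_diff_distrib)
  have "degree P \<le> card W - 1"
    using classes degree_cleared_gen_fun_poly[OF \<open>finite W\<close>, of A] degree_cleared_gen_fun_poly[OF \<open>finite W\<close>, of B]
    by (auto simp: P_def intro: degree_diff_le)
  have "0 < card Z"
    using \<open>finite Z\<close> \<open>Z \<noteq> {}\<close> by (simp add: card_gt_0_iff)
  have "P = 0"
  proof (rule poly_eqI_degree[of Z])
    show "poly P x = poly 0 x" if "x \<in> Z" for x
    proof -
      from that \<open>Z \<inter> W = {}\<close> have "x \<notin> W"
        by blast
      with that eq poly_P show ?thesis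
        by simp
    qed
    show "degree P < card Z" and "degree 0 < card Z"
      using \<open>degree P \<le> card W - 1\<close> \<open>card W \<le> card Z\<close> \<open>0 < card Z\<close> by simp_all
  qed
  moreover have "(\<Prod>w\<in>W. z - w) \<noteq> 0"
    using \<open>finite W\<close> \<open>z \<notin> W\<close> by auto
  ultimately show ?thesis
    using poly_P[OF \<open>z \<notin> W\<close>] by simp
qed

section \<open>The set S and the roots of unity\<close>

lemma S_set_eq_UN: "S_set ns = (\<Union>n \<in> set ns. (\<lambda>r. of_nat r / of_nat n) ` {..<n})"
  unfolding S_set_def by auto

lemma finite_S_set: "finite (S_set ns)"
  unfolding S_set_eq_UN by simp

lemma card_S_set_ge:
  assumes "n \<in> set ns" and "0 < n"
  shows "n \<le> card (S_set ns)"
proof -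
  have "inj_on (\<lambda>r. of_nat r / of_nat n :: rat) {..<n}"
    using \<open>0 < n\<close> by (auto simp: inj_on_def)
  then have "n = card ((\<lambda>r. of_nat r / of_nat n :: rat) ` {..<n})"
    by (simp add: card_image)
  also have "\<dots> \<le> card (S_set ns)"
    using \<open>n \<in> set ns\<close> by (intro card_mono finite_S_set) (auto simp: S_set_eq_UN)
  finally show ?thesis .
qed

lemma roots_unity_subset_image_S_set:
  assumes "\<forall>n \<in> set ns. 0 < n"
  shows "{w::complex. \<exists>n \<in> set ns. w ^ n = 1} \<subseteq> (\<lambda>q. cis (2 * pi * of_rat q)) ` S_set ns"
proof
  fix w :: complex assume "w \<in> {w. \<exists>n \<in> set ns. w ^ n = 1}"
  then obtain n where "n \<in> set ns" "w ^ n = 1"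
    by blast
  with assms bij_betw_roots_unity[of n] obtain r where "r < n" "w = cis (2 * pi * real r / real n)"
    by (auto simp: bij_betw_def)
  then have "w = cis (2 * pi * of_rat (of_nat r / of_nat n))"
    by (simp add: of_rat_divide)
  moreover have "of_nat r / of_nat n \<in> S_set ns"
    using \<open>n \<in> set ns\<close> \<open>r < n\<close> by (auto simp: S_set_def)
  ultimately show "w \<in> (\<lambda>q. cis (2 * pi * of_rat q)) ` S_set ns"
    by (rule image_eqI)
qed

lemma card_roots_unity_le_card_S_set:
  assumes "\<forall>n \<in> set ns. 0 < n"
  shows "finite {w::complex. \<exists>n \<in> set ns. w ^ n = 1}"
    and "card {w::complex. \<exists>n \<in> set ns. w ^ n = 1} \<le> card (S_set ns)"
proof -
  have sub: "{w::complex. \<exists>n \<in> set ns. w ^ n = 1} \<subseteq> (\<lambda>q. cis (2 * pi * of_rat q)) ` S_set ns"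
    using assms by (rule roots_unity_subset_image_S_set)
  then show "finite {w::complex. \<exists>n \<in> set ns. w ^ n = 1}"
    by (rule finite_subset) (simp add: finite_S_set)
  have "card {w::complex. \<exists>n \<in> set ns. w ^ n = 1} \<le> card ((\<lambda>q. cis (2 * pi * of_rat q)) ` S_set ns)"
    by (rule card_mono[OF finite_imageI[OF finite_S_set] sub])
  also have "\<dots> \<le> card (S_set ns)"
    by (rule card_image_le[OF finite_S_set])
  finally show "card {w::complex. \<exists>n \<in> set ns. w ^ n = 1} \<le> card (S_set ns)" .
qed

lemma prime_not_dvd_prod_of_less:
  fixes p :: nat
  assumes "prime p" and "finite M" and "\<forall>n \<in> M. 0 < n \<and> n < p"
  shows "\<not> p dvd \<Prod>M"
proof
  assume "p dvd \<Prod>M"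
  then obtain n where "n \<in> M" and "p dvd n"
    using assms(1,2) by (auto simp: prime_dvd_prod_iff)
  moreover from assms(3) \<open>n \<in> M\<close> have "0 < n" and "n < p"
    by auto
  ultimately show False
    by (auto dest: dvd_imp_le)
qed

lemma covering_gen_fun_eq_if_eq_at_primitive_root:
  fixes A B :: res_system and \<zeta> :: complex
  defines "ns \<equiv> map snd A @ map snd B"
  assumes classes: "\<forall>(a, n) \<in> set A \<union> set B. a < n \<and> n dvd N"
    and "prime p" and "\<not> p dvd N" and "card (S_set ns) < p" and "primitive_root_of_unity \<zeta> p"
    and "covering_gen_fun A \<zeta> = covering_gen_fun B \<zeta>"
  shows "\<forall>z::complex. z ^ N \<noteq> 1 \<longrightarrow> covering_gen_fun A z = covering_gen_fun B z"
proof (intro allI impI)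
  fix z :: complex assume "z ^ N \<noteq> 1"
  define W where "W = {w::complex. \<exists>n \<in> set ns. w ^ n = 1}"
  define Z where "Z = (\<lambda>u. \<zeta> ^ u) ` {1..<p}"
  have moduli: "(a, n) \<in> set A \<union> set B \<Longrightarrow> n \<in> set ns" for a n
    by (force simp: ns_def)
  have pos: "0 < n" and dvd: "n dvd N" if "n \<in> set ns" for n
    using that classes by (auto simp: ns_def)
  have less_p: "n < p" if "n \<in> set ns" for n
    using card_S_set_ge[OF that pos[OF that]] \<open>card (S_set ns) < p\<close> by simp
  have not_dvd: "\<not> p dvd u" if "u \<in> {1..<p}" for u
    using that by (auto dest: dvd_imp_le)
  have "finite W" and "card W \<le> card Z"
    using card_roots_unity_le_card_S_set[of ns] pos \<open>card (S_set ns) < p\<close>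
      card_primitive_root_powers[OF \<open>primitive_root_of_unity \<zeta> p\<close> prime_gt_0_nat[OF \<open>prime p\<close>]]
    by (auto simp: W_def Z_def)
  moreover have "Z \<inter> W = {}"
    using primitive_root_power_power_ne_1[OF \<open>primitive_root_of_unity \<zeta> p\<close> \<open>prime p\<close>] pos less_p
    by (fastforce simp: Z_def W_def)
  moreover have "\<forall>w \<in> Z. covering_gen_fun A w = covering_gen_fun B w"
    using covering_gen_fun_eq_primitive_root_power[OF classes \<open>prime p\<close> \<open>\<not> p dvd N\<close>
        \<open>primitive_root_of_unity \<zeta> p\<close> _ \<open>covering_gen_fun A \<zeta> = covering_gen_fun B \<zeta>\<close>] not_dvd
    by (auto simp: Z_def)
  moreover have "z \<notin> W"
  proof
    assume "z \<in> W"
    then obtain n where "n \<in> set ns" and "z ^ n = 1"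
      by (auto simp: W_def)
    moreover from dvd[OF \<open>n \<in> set ns\<close>] obtain k where "N = n * k" ..
    ultimately show False
      using \<open>z ^ N \<noteq> 1\<close> by (simp add: power_mult)
  qed
  moreover have "\<forall>(a, n) \<in> set A \<union> set B. a < n \<and> {w. w ^ n = 1} \<subseteq> W"
    using classes moduli by (auto simp: W_def)
  moreover have "finite Z" and "Z \<noteq> {}"
    using prime_gt_1_nat[OF \<open>prime p\<close>] by (auto simp: Z_def)
  ultimately show "covering_gen_fun A z = covering_gen_fun B z"
    by (intro covering_gen_fun_eq_if_eq_on_large_set[of W A B Z]) auto
qed

theorem theorem1p1:
  fixes A B :: res_system and p :: nat and \<zeta> :: complex
  assumes "\<forall>(a, n) \<in> set A. 0 < n \<and> a < n"
      and "\<forall>(b, m) \<in> set B. 0 < m \<and> b < m"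
      and "prime p"
      and "p > card (S_set (map snd A @ map snd B))"
      and "primitive_root_of_unity \<zeta> p"
  shows "covering_equiv A B \<longleftrightarrow>
         (\<Sum>(a, n) \<leftarrow> A. \<zeta> ^ a / (1 - \<zeta> ^ n)) = (\<Sum>(b, m) \<leftarrow> B. \<zeta> ^ b / (1 - \<zeta> ^ m))"
proof -
  define N where "N = \<Prod>(set (map snd A @ map snd B))"
  have "0 < n" if "n \<in> set (map snd A @ map snd B)" for n
    using that assms(1,2) by auto
  then have "\<forall>n \<in> set (map snd A @ map snd B). 0 < n \<and> n < p"
    using card_S_set_ge assms(4) by (metis order_le_less_trans)
  then have "0 < N" and "\<not> p dvd N"
    using prime_not_dvd_prod_of_less[OF \<open>prime p\<close>] by (simp_all add: N_def prod_pos)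
  have "n dvd N" if "(a, n) \<in> set A \<union> set B" for a n
    unfolding N_def using that by (intro dvd_prodI) force+
  with assms(1,2) have classes: "\<forall>(a, n) \<in> set A \<union> set B. a < n \<and> n dvd N"
    by blast
  have "\<zeta> ^ N \<noteq> 1"
    using primitive_root_of_unity_power_eq_1_iff[OF assms(5) prime_gt_0_nat[OF \<open>prime p\<close>]] \<open>\<not> p dvd N\<close>
    by simp
  then show ?thesis
    unfolding covering_gen_fun_def[symmetric]
      covering_equiv_iff_gen_fun_eq[OF classes \<open>0 < N\<close>, where 'a = complex]
    using covering_gen_fun_eq_if_eq_at_primitive_root[OF classes \<open>prime p\<close> \<open>\<not> p dvd N\<close> assms(4,5)]
    by blast
qed

end
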